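(* Consider the single-block on-chain auction game described in the context with $n=1$ (so $N=\{0,1\}$), $F=F_0=\mathrm{Uniform}[0,1]$, and reserve price $r>0$. Then the following strategy profile constitutes an equilibrium: (i) Bidder 1 bids truthfully, $b_1=v_1$, and tips $t_1(v_1)=v_1/2-r$ if $v_1>2r$ and $t_1(v_1)=0$ otherwise. (ii) Bidder 0, having observed bidder 1's tip $t_1$ and knowing his value $v_0$, bribes (i.e. offers the proposer a payment of $t_1$ in exchange for excluding bidder 1's bid) if $t_1+r\le v_0$, and does not bribe otherwise; moreover bidder 0 submits a nonzero bid in the auction if and only if he bribes. (iii) The proposer accepts bidder 0's bribe whenever it is offered and then excludes bidder 1's bid; otherwise the proposer includes both bids.
   Context: Single-block on-chain auction game. A seller has one indivisible good; there are $n+1$ buyers $N=\{0,1,\dots,n\}$, $n\ge 1$, with quasilinear utilities. Buyer $i$ has a private value $v_i$; $v_0$ is drawn from a distribution with CDF $F_0$, and $v_1,\dots,v_n$ are drawn i.i.d. from a distribution with CDF $F$, all independent, with supports $[0,1]$; $n,F,F_0$ are common knowledge. The seller runs a sealed-bid second-price auction with reserve price $r$ in which bids are accepted in a single block built by a single profit-maximizing proposer. Timing: (1) the seller announces the auction; (2) buyers learn their values; (3) buyers $1,\dots,n$ simultaneously submit a private (sealed) bid $b_i$ and a publicly observed tip $t_i\ge 0$; (4) buyer 0 observes the tips and his value $v_0$, and may make the proposer a take-it-or-leave-it offer of a subset $S\subseteq\{1,\dots,n\}$ and a payment $p$ to exclude the bids in $S$; buyer 0 also submits his own bid $b_0$;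 (5) the proposer accepts (including exactly the bids of $N\setminus S$ and receiving $p$) or rejects (including all bids); he accepts if and only if $p\ge\sum_{i\in S}t_i$; (6) the second-price auction is computed on the included bids: the highest included bid wins if it is at least $r$, paying the maximum of $r$ and the other included bids. A bidder pays his tip to the proposer iff his bid is included. Solution concept: perfect Bayesian equilibrium, restricted to profiles in which (a) bidders $1,\dots,n$ bid truthfully and use a common tipping function of their value, and (b) bidder 0 bids his value if, given the observed tips, he assigns positive probability to winning, and otherwise bids $0$ or does not bid. Such profiles are called equilibria. *)

theory Defs
  imports "HOL-Probability.Probability"
begin

text \<open>Bidder 0's offer to the proposer: None = no offer;
  Some (ex, p) = offer of payment p to exclude the set S, where S = {1} if ex and S = {} otherwise.\<close>
type_synonym offer = "(bool \<times> real) option"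

text \<open>The proposer accepts iff p is at least the sum of the tips of the bids in S.\<close>
definition accepted :: "real \<Rightarrow> offer \<Rightarrow> bool" where
  "accepted t1 off = (case off of None \<Rightarrow> False | Some (ex, p) \<Rightarrow> (if ex then t1 else 0) \<le> p)"

definition excluded1 :: "real \<Rightarrow> offer \<Rightarrow> bool" where
  "excluded1 t1 off = (case off of None \<Rightarrow> False | Some (ex, p) \<Rightarrow> accepted t1 off \<and> ex)"

definition bribe_paid :: "real \<Rightarrow> offer \<Rightarrow> real" where
  "bribe_paid t1 off = (case off of None \<Rightarrow> 0 | Some (ex, p) \<Rightarrow> (if accepted t1 off then p else 0))"

definition included_bid1 :: "real \<Rightarrow> offer \<Rightarrow> real \<Rightarrow> real option" where
  "included_bid1 t1 off b1 = (if excluded1 t1 off then None else Some b1)"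

text \<open>The highest included bid wins if it is at least r; ties are broken in favour of bidder 1.
  The winner pays the maximum of r and the other included bid.\<close>
definition wins0 :: "real \<Rightarrow> real option \<Rightarrow> real option \<Rightarrow> bool" where
  "wins0 r B0 B1 = (case B0 of None \<Rightarrow> False
      | Some x \<Rightarrow> r \<le> x \<and> (case B1 of None \<Rightarrow> True | Some y \<Rightarrow> y < x))"

definition wins1 :: "real \<Rightarrow> real option \<Rightarrow> real option \<Rightarrow> bool" where
  "wins1 r B0 B1 = (case B1 of None \<Rightarrow> False
      | Some y \<Rightarrow> r \<le> y \<and> (case B0 of None \<Rightarrow> True | Some x \<Rightarrow> x \<le> y))"

definition price :: "real \<Rightarrow> real option \<Rightarrow> real" where
  "price r B = (case B of None \<Rightarrow> r | Some z \<Rightarrow> max r z)"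

definition util0 :: "real \<Rightarrow> real \<Rightarrow> real \<Rightarrow> real \<Rightarrow> offer \<Rightarrow> real option \<Rightarrow> real" where
  "util0 r v0 t1 b1 off B0 = (let B1 = included_bid1 t1 off b1 in
     (if wins0 r B0 B1 then v0 - price r B1 else 0) - bribe_paid t1 off)"

definition util1 :: "real \<Rightarrow> real \<Rightarrow> real \<Rightarrow> real \<Rightarrow> offer \<Rightarrow> real option \<Rightarrow> real" where
  "util1 r v1 b1 t1 off B0 = (let B1 = included_bid1 t1 off b1 in
     (if wins1 r B0 B1 then v1 - price r B0 else 0) - (if B1 = None then 0 else t1))"

text \<open>Strategies: bidder 1 maps his value to (bid, tip); bidder 0 maps (observed tip, own value)
  to (offer, own bid).  Beliefs of bidder 0: observed tip \<mapsto> distribution of v1.\<close>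
type_synonym strat1 = "real \<Rightarrow> real \<times> real"
type_synonym strat0 = "real \<Rightarrow> real \<Rightarrow> offer \<times> real option"
type_synonym beliefs = "real \<Rightarrow> real measure"

definition valid_offer :: "offer \<Rightarrow> bool" where
  "valid_offer off = (case off of None \<Rightarrow> True | Some (ex, p) \<Rightarrow> 0 \<le> p)"

definition valid_bid0 :: "real option \<Rightarrow> bool" where
  "valid_bid0 B = (case B of None \<Rightarrow> True | Some x \<Rightarrow> 0 \<le> x)"

definition EU1 :: "real \<Rightarrow> strat0 \<Rightarrow> real \<Rightarrow> real \<Rightarrow> real \<Rightarrow> real" where
  "EU1 r \<sigma>0 v1 b t = integral {0..1} (\<lambda>v0. util1 r v1 b t (fst (\<sigma>0 t v0)) (snd (\<sigma>0 t v0)))"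

definition EU0 :: "real \<Rightarrow> strat1 \<Rightarrow> beliefs \<Rightarrow> real \<Rightarrow> real \<Rightarrow> offer \<Rightarrow> real option \<Rightarrow> real" where
  "EU0 r \<sigma>1 \<mu> t v0 off B0 = (\<integral>v1. util0 r v0 t (fst (\<sigma>1 v1)) off B0 \<partial>(\<mu> t))"

definition winprob0 :: "real \<Rightarrow> strat1 \<Rightarrow> beliefs \<Rightarrow> real \<Rightarrow> real \<Rightarrow> offer \<Rightarrow> real" where
  "winprob0 r \<sigma>1 \<mu> t v0 off =
     measure (\<mu> t) {v1. wins0 r (Some v0) (included_bid1 t off (fst (\<sigma>1 v1)))}"

text \<open>Bayes consistency: \<mu> is a regular conditional distribution of v1 given the tip,
  v1 ~ Uniform[0,1]: for Borel A, B, P(v1 \<in> A, tip \<in> B) = E[\<mu>_tip(A) ; tip \<in> B].\<close>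
definition consistent_beliefs :: "strat1 \<Rightarrow> beliefs \<Rightarrow> bool" where
  "consistent_beliefs \<sigma>1 \<mu> \<longleftrightarrow>
     (\<forall>t. prob_space (\<mu> t) \<and> sets (\<mu> t) = sets borel \<and> measure (\<mu> t) {0..1} = 1) \<and>
     (\<forall>A \<in> sets borel. \<forall>B \<in> sets borel.
        ((\<lambda>v1. measure (\<mu> (snd (\<sigma>1 v1))) A) has_integral
            measure lborel {v1 \<in> {0..1}. v1 \<in> A \<and> snd (\<sigma>1 v1) \<in> B})
          {v1 \<in> {0..1}. snd (\<sigma>1 v1) \<in> B})"

definition restriction_a :: "strat1 \<Rightarrow> bool" where
  "restriction_a \<sigma>1 \<longleftrightarrow> (\<forall>v1 \<in> {0..1}. fst (\<sigma>1 v1) = v1 \<and> 0 \<le> snd (\<sigma>1 v1))"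

definition restriction_b :: "real \<Rightarrow> strat1 \<Rightarrow> strat0 \<Rightarrow> beliefs \<Rightarrow> bool" where
  "restriction_b r \<sigma>1 \<sigma>0 \<mu> \<longleftrightarrow>
     (\<forall>t \<ge> 0. \<forall>v0 \<in> {0..1}.
        valid_offer (fst (\<sigma>0 t v0)) \<and>
        (if 0 < winprob0 r \<sigma>1 \<mu> t v0 (fst (\<sigma>0 t v0)) then snd (\<sigma>0 t v0) = Some v0
         else snd (\<sigma>0 t v0) \<in> {None, Some 0}))"

definition optimal1 :: "real \<Rightarrow> strat1 \<Rightarrow> strat0 \<Rightarrow> bool" where
  "optimal1 r \<sigma>1 \<sigma>0 \<longleftrightarrow>
     (\<forall>v1 \<in> {0..1}. \<forall>b \<ge> 0. \<forall>t \<ge> 0.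
        EU1 r \<sigma>0 v1 b t \<le> EU1 r \<sigma>0 v1 (fst (\<sigma>1 v1)) (snd (\<sigma>1 v1)))"

definition optimal0 :: "real \<Rightarrow> strat1 \<Rightarrow> strat0 \<Rightarrow> beliefs \<Rightarrow> bool" where
  "optimal0 r \<sigma>1 \<sigma>0 \<mu> \<longleftrightarrow>
     (\<forall>t \<ge> 0. \<forall>v0 \<in> {0..1}. \<forall>off B0. valid_offer off \<and> valid_bid0 B0 \<longrightarrow>
        EU0 r \<sigma>1 \<mu> t v0 off B0 \<le> EU0 r \<sigma>1 \<mu> t v0 (fst (\<sigma>0 t v0)) (snd (\<sigma>0 t v0)))"

text \<open>Equilibrium: perfect Bayesian equilibrium (with some consistent belief system)
  satisfying restrictions (a) and (b).  The proposer's behaviour is fixed by the rule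
  encoded in accepted.\<close>
definition equilibrium :: "real \<Rightarrow> strat1 \<Rightarrow> strat0 \<Rightarrow> bool" where
  "equilibrium r \<sigma>1 \<sigma>0 \<longleftrightarrow> restriction_a \<sigma>1 \<and>
     (\<exists>\<mu>. consistent_beliefs \<sigma>1 \<mu> \<and> restriction_b r \<sigma>1 \<sigma>0 \<mu> \<and>
          optimal1 r \<sigma>1 \<sigma>0 \<and> optimal0 r \<sigma>1 \<sigma>0 \<mu>)"

end

theory Submission
  imports Defs
begin

text \<open>Bidder 0 bribes exactly when excluding bidder 1 at the price of his tip t leaves a
  nonnegative surplus v0 - r - t, so a tip t keeps bidder 1 in the auction with probability
  min 1 (t + r), and his interim utility is min 1 (t + r) * (max 0 (v1 - r) - t).  Dropping the cap,
  this is a concave quadratic in t maximised at max 0 (v1/2 - r), and the cap does not bind there.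
  Conversely a positive tip t reveals v1 = 2 (t + r) while tip 0 pools the values below 2r; under
  these beliefs outbidding bidder 1 never pays more than max 0 (v0 - r - t), which bribing
  achieves.  Bayes consistency is checked separately on the pooling and the separating types.\<close>

lemma has_integral_step_unit_interval:
  fixes s C :: real
  assumes "0 \<le> s"
  shows "((\<lambda>x. if s \<le> x then 0 else C) has_integral (min 1 s * C)) {0..1}"
proof -
  define m where "m = min 1 s"
  have m: "0 \<le> m" "m \<le> 1" using assms by (auto simp: m_def)
  have const: "((\<lambda>x. C) has_integral (m * C)) {0..m}"
    using has_integral_const_real[of C 0 m] m by simp
  have lower: "((\<lambda>x. if s \<le> x then 0 else C) has_integral (m * C)) {0..m}"
    by (rule has_integral_spike_finite[where S = "{s}", OF _ _ const]) (auto simp: m_def)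
  have upper: "((\<lambda>x. if s \<le> x then 0 else C) has_integral 0) {m..1}"
    by (rule has_integral_spike_finite[where S = "{1}", OF _ _ has_integral_0]) (auto simp: m_def)
  have "((\<lambda>x. if s \<le> x then 0 else C) has_integral (m * C + 0)) {0..1}"
    using m lower upper by (rule has_integral_combine)
  then show ?thesis by (simp add: m_def)
qed

lemma has_integral_indicator_lborel:
  fixes S :: "'a::euclidean_space set"
  assumes "S \<in> sets borel" and "bounded S"
  shows "((indicator S :: 'a \<Rightarrow> real) has_integral measure lborel S) UNIV"
proof -
  have "((\<lambda>x. 1::real) has_integral measure lborel S) S"
    using assms by (intro has_integral_measure_lborel emeasure_bounded_finite)
  moreover have "(indicator S :: 'a \<Rightarrow> real) = (\<lambda>x. if x \<in> S then 1 else 0)"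
    by (auto simp: indicator_def)
  ultimately show ?thesis
    by (simp only: has_integral_restrict_UNIV)
qed

lemma (in prob_space) integral_le_nonneg_const:
  fixes f :: "'a \<Rightarrow> real"
  assumes "AE x in M. f x \<le> c" and "0 \<le> c"
  shows "integral\<^sup>L M f \<le> c"
  using assms integral_le_const[of f c] by (cases "integrable M f") (simp_all add: not_integrable_integral_eq)

abbreviation tip1 :: "real \<Rightarrow> real \<Rightarrow> real" where
  "tip1 r v1 \<equiv> if 2 * r < v1 then v1 / 2 - r else 0"

abbreviation bidder1 :: "real \<Rightarrow> strat1" where
  "bidder1 r \<equiv> \<lambda>v1. (v1, tip1 r v1)"

abbreviation bidder0 :: "real \<Rightarrow> strat0" where
  "bidder0 r \<equiv> \<lambda>t1 v0. if t1 + r \<le> v0 then (Some (True, t1), Some v0) else (None, None)"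

lemma uncapped_tip_payoff_le:
  fixes r v1 t :: real
  assumes "0 < r" "v1 \<le> 1" "0 \<le> t"
  shows "(t + r) * (max 0 (v1 - r) - t)
    \<le> min 1 (tip1 r v1 + r) * (max 0 (v1 - r) - tip1 r v1)"
proof (cases "2 * r < v1")
  case True
  \<comment> \<open>AM-GM, the two factors summing to v1\<close>
  have "(t + r) * (v1 - r - t) \<le> (v1 / 2) * (v1 / 2)"
    using sum_squares_ge_zero[of "t + r - v1 / 2" 0] by (simp add: algebra_simps power2_eq_square)
  then show ?thesis using True assms by simp
next
  case False
  show ?thesis
  proof (cases "r \<le> v1")
    case True
    have "t * (v1 - 2 * r - t) \<le> 0" using False assms by (intro mult_nonneg_nonpos) auto
    then show ?thesis using True False assms by (simp add: algebra_simps)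
  next
    case below_reserve: False
    have "(t + r) * (0 - t) \<le> 0" using assms by (intro mult_nonneg_nonpos) auto
    then show ?thesis using below_reserve False by simp
  qed
qed

lemma tip1_best_response:
  fixes r v1 t g :: real
  assumes r: "0 < r" and v1: "v1 \<le> 1" and t: "0 \<le> t" and g: "g \<le> max 0 (v1 - r)"
  shows "min 1 (t + r) * (g - t) \<le> min 1 (tip1 r v1 + r) * (max 0 (v1 - r) - tip1 r v1)"
    (is "_ \<le> ?best")
proof -
  have cap: "0 < min 1 (t + r)" "min 1 (t + r) \<le> t + r" using r t by auto
  have "min 1 (t + r) * (g - t) \<le> min 1 (t + r) * (max 0 (v1 - r) - t)"
    using cap g by (intro mult_left_mono) auto
  also have "\<dots> \<le> ?best"
  proof (cases "max 0 (v1 - r) \<le> t")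
    case True
    have "min 1 (t + r) * (max 0 (v1 - r) - t) \<le> 0"
      using cap True by (intro mult_nonneg_nonpos) auto
    also have "0 \<le> ?best" using r by (auto intro!: mult_nonneg_nonneg)
    finally show ?thesis .
  next
    case False
    have "min 1 (t + r) * (max 0 (v1 - r) - t) \<le> (t + r) * (max 0 (v1 - r) - t)"
      using cap False by (intro mult_right_mono) auto
    also have "\<dots> \<le> ?best" using uncapped_tip_payoff_le[OF r v1 t] .
    finally show ?thesis .
  qed
  finally show ?thesis .
qed

lemma EU1_bidder0:
  assumes "0 < r" "0 \<le> t"
  shows "EU1 r (bidder0 r) v1 b t = min 1 (t + r) * ((if r \<le> b then v1 - r else 0) - t)"
proof -
  have "(\<lambda>v0. util1 r v1 b t (fst (bidder0 r t v0)) (snd (bidder0 r t v0)))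
      = (\<lambda>v0. if t + r \<le> v0 then 0 else (if r \<le> b then v1 - r else 0) - t)"
    by (auto simp: util1_def included_bid1_def excluded1_def accepted_def wins1_def price_def Let_def)
  then show ?thesis
    using has_integral_step_unit_interval[of "t + r" "(if r \<le> b then v1 - r else 0) - t"] assms
    by (simp add: EU1_def integral_unique)
qed

lemma optimal1_bidder1:
  assumes "0 < r"
  shows "optimal1 r (bidder1 r) (bidder0 r)"
  unfolding optimal1_def
proof (intro ballI allI impI)
  fix v1 b t :: real
  assume v1: "v1 \<in> {0..1}" and "0 \<le> b" and t: "0 \<le> t"
  have "0 \<le> tip1 r v1" by simp
  then show "EU1 r (bidder0 r) v1 b t \<le> EU1 r (bidder0 r) v1 (fst (bidder1 r v1)) (snd (bidder1 r v1))"
    using tip1_best_response[OF assms, of v1 t "if r \<le> b then v1 - r else 0"] v1 t assms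
    by (simp add: EU1_bidder0 max_def)
qed

text \<open>Tips above 1/2 - r are off the equilibrium path; there bidder 0 believes v1 = 1.\<close>

definition tip_beliefs :: "real \<Rightarrow> beliefs" where
  "tip_beliefs r t = (if t \<le> 0 then uniform_measure lborel {0..min 1 (2 * r)}
     else return borel (min 1 (2 * (t + r))))"

lemma sets_tip_beliefs [simp]: "sets (tip_beliefs r t) = sets borel"
  by (simp add: tip_beliefs_def)

lemma space_tip_beliefs [simp]: "space (tip_beliefs r t) = UNIV"
  using sets_eq_imp_space_eq[OF sets_tip_beliefs] by simp

lemma prob_space_tip_beliefs:
  assumes "0 < r"
  shows "prob_space (tip_beliefs r t)"
  using assms by (auto simp: tip_beliefs_def intro!: prob_space_uniform_measure prob_space_return)

lemma measure_tip_beliefs_unit_interval: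
  assumes "0 < r"
  shows "measure (tip_beliefs r t) {0..1} = 1"
proof -
  have "{0..min 1 (2 * r)} \<inter> {0..1} = {0..min 1 (2 * r)}" by auto
  then show ?thesis
    using assms by (cases "t \<le> 0") (simp_all add: tip_beliefs_def measure_uniform_measure measure_return)
qed

lemma measure_tip_beliefs_tip1:
  assumes "0 < r" and "v1 \<le> 1" and A: "A \<in> sets borel"
  shows "measure (tip_beliefs r (tip1 r v1)) A =
    (if 2 * r < v1 then indicator A v1
     else measure lborel ({0..min 1 (2 * r)} \<inter> A) / min 1 (2 * r))"
proof (cases "2 * r < v1")
  case True
  then show ?thesis using assms by (simp add: tip_beliefs_def measure_return)
next
  case False
  have "measure (uniform_measure lborel {0..min 1 (2 * r)}) A
      = measure lborel ({0..min 1 (2 * r)} \<inter> A) / measure lborel {0..min 1 (2 * r)}"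
    using assms by (intro measure_uniform_measure) auto
  then show ?thesis using False assms by (simp add: tip_beliefs_def)
qed

lemma has_integral_measure_tip_beliefs:
  assumes r: "0 < r" and A[measurable]: "A \<in> sets borel" and B[measurable]: "B \<in> sets borel"
  shows "((\<lambda>v1. measure (tip_beliefs r (tip1 r v1)) A) has_integral
      measure lborel {v1 \<in> {0..1}. v1 \<in> A \<and> tip1 r v1 \<in> B}) {v1 \<in> {0..1}. tip1 r v1 \<in> B}"
proof -
  define c where "c = min 1 (2 * r)"
  define \<alpha> where "\<alpha> = measure lborel ({0..c} \<inter> A) / c"
  define P where "P = (if 0 \<in> B then {0..c} else {})"
  define Q where "Q = {x \<in> space borel. x \<in> {0..1} \<and> 2 * r < x \<and> x / 2 - r \<in> B \<and> x \<in> A}"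
  have c: "0 < c" "c \<le> 1" "c \<le> 2 * r" using r by (auto simp: c_def)
  have P: "P \<in> sets borel" "bounded P" by (auto simp: P_def)
  have Q: "Q \<in> sets borel" "bounded Q"
    unfolding Q_def by measurable (rule bounded_subset[OF bounded_closed_interval[of 0 1]], auto)
  have integrand:
    "(\<lambda>x. if x \<in> {v1 \<in> {0..1}. tip1 r v1 \<in> B} then measure (tip_beliefs r (tip1 r x)) A else 0)
      = (\<lambda>x. \<alpha> * indicator P x + indicator Q x)"
  proof
    fix x
    show "(if x \<in> {v1 \<in> {0..1}. tip1 r v1 \<in> B} then measure (tip_beliefs r (tip1 r x)) A else 0)
      = \<alpha> * indicator P x + indicator Q x"
      using measure_tip_beliefs_tip1[OF r _ A, of x] c
      by (auto simp: \<alpha>_def P_def Q_def c_def indicator_def)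
  qed
  have integral: "((\<lambda>x. \<alpha> * indicator P x + indicator Q x) has_integral
      (\<alpha> * measure lborel P + measure lborel Q)) UNIV"
    using P Q by (intro has_integral_add has_integral_mult_right has_integral_indicator_lborel)
  have total: "\<alpha> * measure lborel P + measure lborel Q
      = measure lborel {v1 \<in> {0..1}. v1 \<in> A \<and> tip1 r v1 \<in> B}"
  proof -
    have pooled: "\<alpha> * measure lborel P = measure lborel (P \<inter> A)"
      using c by (auto simp: P_def \<alpha>_def Int_commute)
    have disjoint: "measure lborel (P \<inter> A) + measure lborel Q = measure lborel ((P \<inter> A) \<union> Q)"
    proof (rule measure_Union[symmetric])
      show "emeasure lborel (P \<inter> A) \<noteq> \<infinity>"
        using P by (intro less_imp_neq emeasure_bounded_finite bounded_Int disjI1)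
      show "emeasure lborel Q \<noteq> \<infinity>"
        using Q by (intro less_imp_neq emeasure_bounded_finite) simp
      show "P \<inter> A \<inter> Q = {}" using c by (auto simp: P_def Q_def)
    qed (use P Q in auto)
    have "(P \<inter> A) \<union> Q = {v1 \<in> {0..1}. v1 \<in> A \<and> tip1 r v1 \<in> B}"
      using c by (auto simp: P_def Q_def c_def)
    then show ?thesis by (simp only: pooled disjoint)
  qed
  have "((\<lambda>x. if x \<in> {v1 \<in> {0..1}. tip1 r v1 \<in> B} then measure (tip_beliefs r (tip1 r x)) A else 0)
      has_integral measure lborel {v1 \<in> {0..1}. v1 \<in> A \<and> tip1 r v1 \<in> B}) UNIV"
    unfolding integrand total[symmetric] by (rule integral)
  then show ?thesis by (simp only: has_integral_restrict_UNIV)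
qed

lemma consistent_beliefs_tip_beliefs:
  assumes "0 < r"
  shows "consistent_beliefs (bidder1 r) (tip_beliefs r)"
  using assms prob_space_tip_beliefs measure_tip_beliefs_unit_interval has_integral_measure_tip_beliefs
  by (simp add: consistent_beliefs_def)

text \<open>Outbidding bidder 1 instead of excluding him costs at least his bid, which the beliefs put
  at 2 (t + r) > t + r after a positive tip, or at the maximal value 1.\<close>

lemma util0_le_surplus:
  assumes "0 < r" "0 \<le> t" "v0 \<le> 1" "valid_offer off" and "t \<le> 0 \<or> v1 = min 1 (2 * (t + r))"
  shows "util0 r v0 t v1 off B0 \<le> max 0 (v0 - r - t)"
  using assms
  by (auto simp: util0_def included_bid1_def excluded1_def accepted_def wins0_def price_def
      bribe_paid_def valid_offer_def Let_def split: option.splits if_splits)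

lemma util0_bidder0:
  assumes "0 \<le> t"
  shows "util0 r v0 t v1 (fst (bidder0 r t v0)) (snd (bidder0 r t v0)) = max 0 (v0 - r - t)"
  using assms
  by (auto simp: util0_def included_bid1_def excluded1_def accepted_def wins0_def price_def
      bribe_paid_def Let_def)

lemma AE_util0_le_surplus:
  assumes "0 < r" "0 \<le> t" "v0 \<le> 1" "valid_offer off"
  shows "AE v1 in tip_beliefs r t. util0 r v0 t v1 off B0 \<le> max 0 (v0 - r - t)"
proof (cases "t \<le> 0")
  case True
  then show ?thesis by (intro AE_I2 util0_le_surplus) (use assms in auto)
next
  case False
  then have "UNIV - {min 1 (2 * (t + r))} \<in> null_sets (tip_beliefs r t)"
    by (intro null_setsI) (auto simp: tip_beliefs_def emeasure_return)
  then show ?thesis by (rule AE_I') (use assms in \<open>auto intro: util0_le_surplus\<close>)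
qed

lemma optimal0_bidder0:
  assumes "0 < r"
  shows "optimal0 r (bidder1 r) (bidder0 r) (tip_beliefs r)"
  unfolding optimal0_def
proof (intro allI impI ballI)
  fix t v0 :: real and off B0
  assume t: "0 \<le> t" and v0: "v0 \<in> {0..1}" and valid: "valid_offer off \<and> valid_bid0 B0"
  interpret prob_space "tip_beliefs r t" using assms by (rule prob_space_tip_beliefs)
  have "EU0 r (bidder1 r) (tip_beliefs r) t v0 off B0 \<le> max 0 (v0 - r - t)"
    unfolding EU0_def fst_conv
    using AE_util0_le_surplus[OF assms t] v0 valid by (intro integral_le_nonneg_const) auto
  also have "\<dots> = EU0 r (bidder1 r) (tip_beliefs r) t v0 (fst (bidder0 r t v0)) (snd (bidder0 r t v0))"
    using prob_space unfolding EU0_def util0_bidder0[OF t] by simp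
  finally show "EU0 r (bidder1 r) (tip_beliefs r) t v0 off B0
      \<le> EU0 r (bidder1 r) (tip_beliefs r) t v0 (fst (bidder0 r t v0)) (snd (bidder0 r t v0))" .
qed

lemma winprob0_bidder0:
  assumes r: "0 < r" and t: "0 \<le> t" and v0: "v0 \<le> 1"
  shows "winprob0 r (bidder1 r) (tip_beliefs r) t v0 (fst (bidder0 r t v0)) = (if t + r \<le> v0 then 1 else 0)"
proof -
  interpret prob_space "tip_beliefs r t" using r by (rule prob_space_tip_beliefs)
  consider "t + r \<le> v0" | "v0 < r" | "r \<le> v0" "v0 < t + r" by linarith
  then show ?thesis
  proof cases
    case 1
    then have "{v1. wins0 r (Some v0) (included_bid1 t (Some (True, t)) v1)} = UNIV"
      using r t by (auto simp: wins0_def included_bid1_def excluded1_def accepted_def)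
    then show ?thesis using 1 prob_space by (simp add: winprob0_def)
  next
    case 2
    then show ?thesis using t by (simp add: winprob0_def wins0_def)
  next
    case 3
    then have "tip_beliefs r t = return borel (min 1 (2 * (t + r)))" by (simp add: tip_beliefs_def)
    moreover have "{v1. wins0 r (Some v0) (included_bid1 t None v1)} = {..<v0}"
      using 3 by (auto simp: wins0_def included_bid1_def excluded1_def)
    ultimately show ?thesis using 3 r t v0 by (simp add: winprob0_def measure_return indicator_def)
  qed
qed

lemma restriction_b_bidder0:
  assumes "0 < r"
  shows "restriction_b r (bidder1 r) (bidder0 r) (tip_beliefs r)"
  unfolding restriction_b_def
  using winprob0_bidder0[OF assms] by (auto simp: valid_offer_def)

theorem proposition2:
  fixes r :: real
  assumes "0 < r"
  shows "equilibrium r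
           (\<lambda>v1. (v1, if 2 * r < v1 then v1 / 2 - r else 0))
           (\<lambda>t1 v0. if t1 + r \<le> v0 then (Some (True, t1), Some v0) else (None, None))
         \<and> (\<forall>t1 \<ge> 0. \<forall>v0.
              (t1 + r \<le> v0 \<longrightarrow> accepted t1 (Some (True, t1)) \<and> excluded1 t1 (Some (True, t1))) \<and>
              (\<not> t1 + r \<le> v0 \<longrightarrow> \<not> excluded1 t1 None))"
proof
  have "restriction_a (bidder1 r)" by (simp add: restriction_a_def)
  then show "equilibrium r (bidder1 r) (bidder0 r)"
    unfolding equilibrium_def
    using consistent_beliefs_tip_beliefs restriction_b_bidder0 optimal1_bidder1 optimal0_bidder0 assms
    by blast
  show "\<forall>t1 \<ge> 0. \<forall>v0.
      (t1 + r \<le> v0 \<longrightarrow> accepted t1 (Some (True, t1)) \<and> excluded1 t1 (Some (True, t1))) \<and>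
      (\<not> t1 + r \<le> v0 \<longrightarrow> \<not> excluded1 t1 None)"
    by (simp add: accepted_def excluded1_def)
qed

end
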